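(* Let $G$ be a connected graph with $n\ge 2$ vertices and let $k$ be an integer. The following statements are equivalent: (1) there is a GS ordering of $G$ whose $\mathcal{F}$-tree has at most $k$ leaves; (2) there is a $Z^*$-forcing set of $G$ of size at most $k$; (3) there is a generic $Z$-sequence of $G$ of length at least $n-k$.
   Context: All graphs are finite, simple, undirected, connected and non-empty; $N(v)$ is the open and $N[v]=N(v)\cup\{v\}$ the closed neighborhood. A GS ordering of $G$ is an ordering $(v_1,\dots,v_n)$ of $V(G)$ such that every $v_i$ with $i>1$ has a neighbor among $v_1,\dots,v_{i-1}$. Its $\mathcal{F}$-tree is the spanning tree rooted at $v_1$ where the parent of $v_i$ ($i>1$) is its leftmost neighbor in the ordering; a leaf is a non-root vertex without children (the root is never a leaf). A generic $Z$-sequence of $G$ is a sequence $(v_1,\dots,v_\ell)$ of distinct vertices that is a prefix of some GS ordering of $G$ and satisfies $N(v_i)\setminus\bigcup_{j=1}^{i-1}N[v_j]\neq\emptyset$ for all $i\in\{1,\dots,\ell\}$. $Z^*$-rule: if $v$ is a blue vertex that has exactly one white neighbor $w$, and either $w$ is the only white vertex of $G$ or $w$ has at least one white neighbor, then $w$ may be colored blue. A set $S\subseteq V(G)$ is a $Z^*$-forcing set if, coloring $S$ blue and all other vertices white and then iteratively applying the $Z^*$-rule, all vertices of $G$ can be colored blue. *)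

theory Defs
  imports Main
begin

definition simple_graph :: "'a set \<Rightarrow> ('a \<Rightarrow> 'a \<Rightarrow> bool) \<Rightarrow> bool" where
  "simple_graph V E \<longleftrightarrow> finite V \<and> V \<noteq> {} \<and>
     (\<forall>x y. E x y \<longrightarrow> x \<in> V \<and> y \<in> V) \<and>
     (\<forall>x y. E x y \<longrightarrow> E y x) \<and> (\<forall>x. \<not> E x x)"

definition connected_graph :: "'a set \<Rightarrow> ('a \<Rightarrow> 'a \<Rightarrow> bool) \<Rightarrow> bool" where
  "connected_graph V E \<longleftrightarrow> simple_graph V E \<and> (\<forall>x\<in>V. \<forall>y\<in>V. E\<^sup>*\<^sup>* x y)"

definition nbhd :: "('a \<Rightarrow> 'a \<Rightarrow> bool) \<Rightarrow> 'a \<Rightarrow> 'a set" where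
  "nbhd E v = {u. E v u}"

definition cnbhd :: "('a \<Rightarrow> 'a \<Rightarrow> bool) \<Rightarrow> 'a \<Rightarrow> 'a set" where
  "cnbhd E v = insert v (nbhd E v)"

definition gs_ordering :: "'a set \<Rightarrow> ('a \<Rightarrow> 'a \<Rightarrow> bool) \<Rightarrow> 'a list \<Rightarrow> bool" where
  "gs_ordering V E vs \<longleftrightarrow> distinct vs \<and> set vs = V \<and>
     (\<forall>i. 0 < i \<and> i < length vs \<longrightarrow> (\<exists>j<i. E (vs ! i) (vs ! j)))"

definition ftree_parent :: "('a \<Rightarrow> 'a \<Rightarrow> bool) \<Rightarrow> 'a list \<Rightarrow> nat \<Rightarrow> nat" where
  "ftree_parent E vs m = (LEAST j. E (vs ! m) (vs ! j))"

definition ftree_leaves :: "('a \<Rightarrow> 'a \<Rightarrow> bool) \<Rightarrow> 'a list \<Rightarrow> 'a set" where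
  "ftree_leaves E vs = {vs ! i | i. 0 < i \<and> i < length vs \<and>
      \<not> (\<exists>m. 0 < m \<and> m < length vs \<and> ftree_parent E vs m = i)}"

definition generic_Z_sequence :: "'a set \<Rightarrow> ('a \<Rightarrow> 'a \<Rightarrow> bool) \<Rightarrow> 'a list \<Rightarrow> bool" where
  "generic_Z_sequence V E zs \<longleftrightarrow> distinct zs \<and>
     (\<exists>vs. gs_ordering V E vs \<and> zs = take (length zs) vs) \<and>
     (\<forall>i<length zs. nbhd E (zs ! i) - (\<Union>j<i. cnbhd E (zs ! j)) \<noteq> {})"

definition zstar_step :: "'a set \<Rightarrow> ('a \<Rightarrow> 'a \<Rightarrow> bool) \<Rightarrow> 'a set \<Rightarrow> 'a set \<Rightarrow> bool" where
  "zstar_step V E B B' \<longleftrightarrow> (\<exists>v w. v \<in> B \<and> w \<in> V - B \<and> nbhd E v \<inter> (V - B) = {w} \<and>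
       (V - B = {w} \<or> (\<exists>u. E w u \<and> u \<in> V - B)) \<and> B' = insert w B)"

definition zstar_forcing_set :: "'a set \<Rightarrow> ('a \<Rightarrow> 'a \<Rightarrow> bool) \<Rightarrow> 'a set \<Rightarrow> bool" where
  "zstar_forcing_set V E S \<longleftrightarrow> S \<subseteq> V \<and> (zstar_step V E)\<^sup>*\<^sup>* S V"

end

theory Submission
  imports Defs
begin

text \<open>
  (1) \<Longrightarrow> (2): the leaves of an F-tree form a Z*-forcing set. The internal vertices (the root
  and all parents) are forced in decreasing order of position, each by one of its children: a
  child has no neighbour before its parent, so the parent is its only white neighbour, and the
  parent is adjacent to its own white parent. The root is forced last, as the only white vertex,
  by the second vertex of the ordering; this is where n \<ge> 2 is needed.

  (2) \<Longrightarrow> (3): read backwards, a forcing chain lists the forced vertices so that each has its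
  forcer as a private neighbour and, by the Z*-condition, an earlier neighbour. Such a list
  extends to a GS ordering by connectivity, so it is a generic Z-sequence.

  (3) \<Longrightarrow> (1): in a GS ordering beginning with a generic Z-sequence, a private neighbour of the
  i-th vertex has no neighbour before position i, hence is a child of it in the F-tree. So all
  leaves lie outside the Z-sequence.
\<close>

lemma simple_graphD:
  assumes "simple_graph V E"
  shows "finite V" and "E x y \<Longrightarrow> x \<in> V" and "E x y \<Longrightarrow> y \<in> V"
    and "E x y \<Longrightarrow> E y x" and "\<not> E x x"
  using assms unfolding simple_graph_def by auto

lemma rtranclp_exits_set:
  assumes "r\<^sup>*\<^sup>* x y" and "x \<in> A" and "y \<notin> A"
  obtains a b where "a \<in> A" and "b \<notin> A" and "r a b"
  using assms by (induction rule: rtranclp_induct) blast+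

definition gs_list :: "('a \<Rightarrow> 'a \<Rightarrow> bool) \<Rightarrow> 'a list \<Rightarrow> bool" where
  "gs_list E P \<longleftrightarrow> (\<forall>i. 0 < i \<and> i < length P \<longrightarrow> (\<exists>j<i. E (P ! i) (P ! j)))"

lemma gs_ordering_iff: "gs_ordering V E vs \<longleftrightarrow> distinct vs \<and> set vs = V \<and> gs_list E vs"
  unfolding gs_ordering_def gs_list_def by blast

lemma gs_list_snoc:
  assumes "gs_list E P" and "P = [] \<or> (\<exists>a\<in>set P. E b a)"
  shows "gs_list E (P @ [b])"
  unfolding gs_list_def
proof (intro allI impI)
  fix i assume i: "0 < i \<and> i < length (P @ [b])"
  show "\<exists>j<i. E ((P @ [b]) ! i) ((P @ [b]) ! j)"
  proof (cases "i < length P")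
    case True
    then obtain j where "j < i" "E (P ! i) (P ! j)" using assms(1) i unfolding gs_list_def by blast
    then show ?thesis using True by (intro exI[of _ j]) (auto simp: nth_append)
  next
    case False
    with i have "i = length P" and "P \<noteq> []" by auto
    then obtain j where "j < length P" "E b (P ! j)" using assms(2) by (auto simp: in_set_conv_nth)
    then show ?thesis using \<open>i = length P\<close> by (intro exI[of _ j]) (auto simp: nth_append)
  qed
qed

lemma connected_graph_neighbour_outside:
  assumes "connected_graph V E" and "A \<subseteq> V" and "A \<noteq> {}" and "A \<noteq> V"
  obtains c where "c \<in> V - A" and "\<exists>a\<in>A. E c a"
proof -
  obtain x y where "x \<in> A" and "y \<in> V - A" using assms(3,4,2) by blast
  then have "E\<^sup>*\<^sup>* x y" using assms(1,2) unfolding connected_graph_def by blast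
  then obtain a b where "a \<in> A" "b \<notin> A" "E a b"
    using \<open>x \<in> A\<close> \<open>y \<in> V - A\<close> by (elim rtranclp_exits_set) auto
  moreover have "simple_graph V E" using assms(1) unfolding connected_graph_def by blast
  ultimately show ?thesis using that[of b] simple_graphD[of V E] by blast
qed

lemma gs_list_extends_to_gs_ordering:
  assumes cg: "connected_graph V E"
    and "distinct P" and "set P \<subseteq> V" and "gs_list E P"
  shows "\<exists>Q. gs_ordering V E (P @ Q)"
  using assms(2-)
proof (induction "card (V - set P)" arbitrary: P rule: less_induct)
  case less
  have fin: "finite V" using cg unfolding connected_graph_def simple_graph_def by blast
  show ?case
  proof (cases "set P = V")
    case True
    then show ?thesis using less.prems by (intro exI[of _ "[]"]) (simp add: gs_ordering_iff)
  next
    case False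
    obtain c where c: "c \<in> V - set P" "P = [] \<or> (\<exists>a\<in>set P. E c a)"
    proof (cases "P = []")
      case True
      then show ?thesis using False that by auto
    next
      case False
      then show ?thesis
        using connected_graph_neighbour_outside[OF cg less.prems(2)] \<open>set P \<noteq> V\<close> that by blast
    qed
    have "card (V - set (P @ [c])) < card (V - set P)"
      using c fin by (intro psubset_card_mono) auto
    moreover have "distinct (P @ [c])" "set (P @ [c]) \<subseteq> V"
      using less.prems c by auto
    moreover have "gs_list E (P @ [c])" using gs_list_snoc[OF less.prems(3) c(2)] .
    ultimately obtain Q where "gs_ordering V E ((P @ [c]) @ Q)" using less.hyps by blast
    then show ?thesis by (intro exI[of _ "c # Q"]) simp
  qed
qed

definition Z_sequence :: "('a \<Rightarrow> 'a \<Rightarrow> bool) \<Rightarrow> 'a list \<Rightarrow> bool" where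
  "Z_sequence E zs \<longleftrightarrow> (\<forall>i<length zs. nbhd E (zs ! i) - (\<Union>j<i. cnbhd E (zs ! j)) \<noteq> {})"

lemma generic_Z_sequence_iff:
  "generic_Z_sequence V E zs \<longleftrightarrow> (\<exists>Q. gs_ordering V E (zs @ Q)) \<and> Z_sequence E zs"
proof -
  have "(\<exists>vs. gs_ordering V E vs \<and> zs = take (length zs) vs) \<longleftrightarrow> (\<exists>Q. gs_ordering V E (zs @ Q))"
    by (metis append_eq_conv_conj append_take_drop_id)
  moreover have "gs_ordering V E (zs @ Q) \<Longrightarrow> distinct zs" for Q
    unfolding gs_ordering_def by simp
  ultimately show ?thesis unfolding generic_Z_sequence_def Z_sequence_def by blast
qed

lemma Z_sequence_snoc:
  assumes "Z_sequence E zs" and "E w u" and "\<forall>z\<in>set zs. u \<notin> cnbhd E z"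
  shows "Z_sequence E (zs @ [w])"
  unfolding Z_sequence_def
proof (intro allI impI)
  fix i assume i: "i < length (zs @ [w])"
  have prefix: "(\<Union>j<i. cnbhd E ((zs @ [w]) ! j)) = (\<Union>j<i. cnbhd E (zs ! j))"
    using i by (intro SUP_cong refl) (simp add: nth_append)
  show "nbhd E ((zs @ [w]) ! i) - (\<Union>j<i. cnbhd E ((zs @ [w]) ! j)) \<noteq> {}"
  proof (cases "i < length zs")
    case True
    then show ?thesis using assms(1) prefix unfolding Z_sequence_def by (simp add: nth_append)
  next
    case False
    with i have "i = length zs" by simp
    then have "u \<in> nbhd E ((zs @ [w]) ! i) - (\<Union>j<i. cnbhd E (zs ! j))"
      using assms(2,3) by (auto simp: nbhd_def)
    then show ?thesis using prefix by blast
  qed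
qed

lemma zstar_chain_reversed_Z_sequence:
  assumes "simple_graph V E" and "(zstar_step V E)\<^sup>*\<^sup>* B V" and "B \<subseteq> V"
  shows "\<exists>zs. distinct zs \<and> set zs = V - B \<and> gs_list E zs \<and> Z_sequence E zs"
  using assms(2,3)
proof (induction rule: converse_rtranclp_induct)
  case base
  then show ?case by (intro exI[of _ "[]"]) (auto simp: gs_list_def Z_sequence_def)
next
  case (step B B')
  obtain v w where vw: "v \<in> B" "w \<in> V - B" "nbhd E v \<inter> (V - B) = {w}"
    "V - B = {w} \<or> (\<exists>u. E w u \<and> u \<in> V - B)" "B' = insert w B"
    using step.hyps(1) unfolding zstar_step_def by blast
  then obtain zs where zs: "distinct zs" "set zs = V - B'" "gs_list E zs" "Z_sequence E zs"
    using step.IH step.prems by blast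
  have "zs = [] \<or> (\<exists>a\<in>set zs. E w a)"
  proof (cases "V - B = {w}")
    case True
    then have "set zs = {}" using vw(5) zs(2) by auto
    then show ?thesis by simp
  next
    case False
    then show ?thesis using vw zs(2) simple_graphD(5)[OF assms(1), of w] by auto
  qed
  then have "gs_list E (zs @ [w])" using gs_list_snoc[OF zs(3)] by blast
  moreover have "E w v" using vw(3) simple_graphD(4)[OF assms(1), of v w] by (auto simp: nbhd_def)
  moreover have "\<forall>z\<in>set zs. v \<notin> cnbhd E z"
    using vw zs(2) simple_graphD(4)[OF assms(1), of _ v] by (auto simp: cnbhd_def nbhd_def)
  ultimately show ?case
    using Z_sequence_snoc[OF zs(4)] zs(1,2) vw by (intro exI[of _ "zs @ [w]"]) auto
qed

lemma zstar_forcing_set_generic_Z_sequence: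
  assumes cg: "connected_graph V E" and "zstar_forcing_set V E S"
  obtains zs where "generic_Z_sequence V E zs" and "length zs + card S = card V"
proof -
  have sg: "simple_graph V E" using cg unfolding connected_graph_def by blast
  have SV: "S \<subseteq> V" and "(zstar_step V E)\<^sup>*\<^sup>* S V"
    using assms(2) unfolding zstar_forcing_set_def by auto
  then obtain zs where zs: "distinct zs" "set zs = V - S" "gs_list E zs" "Z_sequence E zs"
    using zstar_chain_reversed_Z_sequence[OF sg] by blast
  then obtain Q where "gs_ordering V E (zs @ Q)"
    using gs_list_extends_to_gs_ordering[OF cg] by blast
  then have "generic_Z_sequence V E zs" using zs(4) by (auto simp: generic_Z_sequence_iff)
  moreover have "length zs + card S = card V"
    using distinct_card[OF zs(1)] zs(2) SV simple_graphD(1)[OF sg]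
    by (metis card_Diff_subset finite_subset le_add_diff_inverse2 card_mono)
  ultimately show ?thesis using that by blast
qed

lemma
  assumes "gs_list E vs" and "0 < m" and "m < length vs"
  shows ftree_parent_less: "ftree_parent E vs m < m"
    and ftree_parent_adjacent: "E (vs ! m) (vs ! ftree_parent E vs m)"
    and not_adjacent_before_ftree_parent: "j < ftree_parent E vs m \<Longrightarrow> \<not> E (vs ! m) (vs ! j)"
proof -
  obtain i where "i < m" and i: "E (vs ! m) (vs ! i)" using assms unfolding gs_list_def by blast
  moreover have "ftree_parent E vs m \<le> i"
    unfolding ftree_parent_def using i by (rule Least_le)
  ultimately show "ftree_parent E vs m < m" by simp
  show "E (vs ! m) (vs ! ftree_parent E vs m)"
    unfolding ftree_parent_def using i by (rule LeastI)
  show "j < ftree_parent E vs m \<Longrightarrow> \<not> E (vs ! m) (vs ! j)"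
    unfolding ftree_parent_def by (rule not_less_Least)
qed

lemma ftree_parent_eqI:
  assumes "E (vs ! m) (vs ! i)" and "\<And>j. j < i \<Longrightarrow> \<not> E (vs ! m) (vs ! j)"
  shows "ftree_parent E vs m = i"
  unfolding ftree_parent_def using assms by (intro Least_equality) (auto simp: not_le[symmetric])

lemma ftree_leaves_subset: "ftree_leaves E vs \<subseteq> set vs"
  unfolding ftree_leaves_def by auto

lemma nth_in_ftree_leaves_iff:
  assumes "distinct vs" and "i < length vs"
  shows "vs ! i \<in> ftree_leaves E vs \<longleftrightarrow>
    0 < i \<and> \<not> (\<exists>m. 0 < m \<and> m < length vs \<and> ftree_parent E vs m = i)"
  using assms unfolding ftree_leaves_def by (auto simp: nth_eq_iff_index_eq)

lemma Z_sequence_prefix_disjoint_ftree_leaves: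
  assumes sg: "simple_graph V E" and gs: "gs_ordering V E (zs @ Q)" and "Z_sequence E zs"
  shows "ftree_leaves E (zs @ Q) \<inter> set zs = {}"
proof -
  let ?vs = "zs @ Q"
  have dist: "distinct ?vs" and set_vs: "set ?vs = V" using gs unfolding gs_ordering_def by auto
  have "?vs ! i \<notin> ftree_leaves E ?vs" if i: "i < length zs" for i
  proof -
    have nth_vs: "?vs ! j = zs ! j" if "j \<le> i" for j using that i by (simp add: nth_append)
    obtain u where u: "E (zs ! i) u" "\<And>j. j < i \<Longrightarrow> u \<notin> cnbhd E (zs ! j)"
      using \<open>Z_sequence E zs\<close> i unfolding Z_sequence_def nbhd_def by blast
    then obtain m where m: "m < length ?vs" "?vs ! m = u"
      using set_vs simple_graphD(3)[OF sg] by (metis in_set_conv_nth)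
    have "ftree_parent E ?vs m = i"
    proof (rule ftree_parent_eqI)
      show "E (?vs ! m) (?vs ! i)" using u(1) m(2) nth_vs simple_graphD(4)[OF sg] by simp
      show "\<not> E (?vs ! m) (?vs ! j)" if "j < i" for j
        using u(2)[OF that] m(2) nth_vs[of j] that simple_graphD(4)[OF sg, of u "zs ! j"]
        by (auto simp: cnbhd_def nbhd_def)
    qed
    moreover have "i < m"
    proof (rule ccontr)
      assume "\<not> i < m"
      then have "u = zs ! m" using m nth_vs by simp
      then show False
      proof (cases "m = i")
        case True
        then show False using u(1) \<open>u = zs ! m\<close> simple_graphD(5)[OF sg] by simp
      next
        case False
        then show False using u(2)[of m] \<open>u = zs ! m\<close> \<open>\<not> i < m\<close> by (simp add: cnbhd_def)
      qed
    qed
    ultimately show ?thesis using nth_in_ftree_leaves_iff[OF dist] m(1) by auto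
  qed
  then show ?thesis by (auto simp: in_set_conv_nth nth_append)
qed

lemma generic_Z_sequence_ftree_leaves:
  assumes sg: "simple_graph V E" and "generic_Z_sequence V E zs"
  obtains vs where "gs_ordering V E vs" and "card (ftree_leaves E vs) + length zs \<le> card V"
proof -
  obtain Q where gs: "gs_ordering V E (zs @ Q)" and "Z_sequence E zs"
    using assms(2) unfolding generic_Z_sequence_iff by blast
  then have "ftree_leaves E (zs @ Q) \<subseteq> set Q"
    using Z_sequence_prefix_disjoint_ftree_leaves[OF sg] ftree_leaves_subset[of E "zs @ Q"] by auto
  then have "card (ftree_leaves E (zs @ Q)) \<le> length Q"
    using card_mono[of "set Q"] card_length[of Q] by (meson List.finite_set order_trans)
  moreover have "length zs + length Q = card V"
    using gs distinct_card[of "zs @ Q"] unfolding gs_ordering_def by simp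
  ultimately show ?thesis using that[OF gs] by simp
qed

lemma zstar_step_whiteI:
  assumes "W \<subseteq> V" and "u \<in> V - W" and "nbhd E u \<inter> W = {w}"
    and "W = {w} \<or> (\<exists>x\<in>W. E w x)"
  shows "zstar_step V E (V - W) (V - (W - {w}))"
proof -
  have white: "V - (V - W) = W" using assms(1) by blast
  have "w \<in> W" using assms(3) by blast
  then have "V - (W - {w}) = insert w (V - W)" using assms(1) by blast
  then show ?thesis unfolding zstar_step_def white using assms \<open>w \<in> W\<close> by blast
qed

definition ftree_internal :: "('a \<Rightarrow> 'a \<Rightarrow> bool) \<Rightarrow> 'a list \<Rightarrow> nat set" where
  "ftree_internal E vs = {i. i < length vs \<and>
     (i = 0 \<or> (\<exists>m. 0 < m \<and> m < length vs \<and> ftree_parent E vs m = i))}"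

definition internal_before :: "('a \<Rightarrow> 'a \<Rightarrow> bool) \<Rightarrow> 'a list \<Rightarrow> nat \<Rightarrow> 'a set" where
  "internal_before E vs p = (\<lambda>i. vs ! i) ` {i \<in> ftree_internal E vs. i < p}"

lemma internal_before_subset: "internal_before E vs p \<subseteq> set vs"
  unfolding internal_before_def ftree_internal_def by auto

lemma nth_in_internal_before_iff:
  assumes "distinct vs" and "i < length vs"
  shows "vs ! i \<in> internal_before E vs p \<longleftrightarrow> i \<in> ftree_internal E vs \<and> i < p"
  using assms unfolding internal_before_def ftree_internal_def by (auto simp: nth_eq_iff_index_eq)

lemma internal_before_Suc:
  "internal_before E vs (Suc p) = (if p \<in> ftree_internal E vs
     then insert (vs ! p) (internal_before E vs p) else internal_before E vs p)"
  unfolding internal_before_def by (auto simp: less_Suc_eq)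

lemma ftree_leaves_eq_internal:
  assumes "distinct vs"
  shows "ftree_leaves E vs = set vs - internal_before E vs (length vs)"
proof (intro set_eqI iffI)
  fix x assume "x \<in> ftree_leaves E vs"
  moreover obtain i where "i < length vs" "x = vs ! i"
    using calculation ftree_leaves_subset by (metis in_set_conv_nth subsetD)
  ultimately show "x \<in> set vs - internal_before E vs (length vs)"
    using nth_in_ftree_leaves_iff[OF assms] nth_in_internal_before_iff[OF assms]
    unfolding ftree_internal_def by auto
next
  fix x assume x: "x \<in> set vs - internal_before E vs (length vs)"
  then obtain i where "i < length vs" "x = vs ! i" by (auto simp: in_set_conv_nth)
  then show "x \<in> ftree_leaves E vs"
    using x nth_in_ftree_leaves_iff[OF assms] nth_in_internal_before_iff[OF assms]
    unfolding ftree_internal_def by auto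
qed

lemma ftree_internal_has_child:
  assumes "gs_list E vs" and "2 \<le> length vs" and "p \<in> ftree_internal E vs"
  obtains m where "0 < m" and "m < length vs" and "ftree_parent E vs m = p"
proof (cases "p = 0")
  case True
  then show ?thesis using that[of 1] ftree_parent_less[OF assms(1), of 1] assms(2) by simp
next
  case False
  then show ?thesis using assms(3) that unfolding ftree_internal_def by blast
qed

lemma nbhd_inter_internal_before_parent:
  assumes "gs_list E vs" and "distinct vs" and "0 < m" and "m < length vs"
  defines "p \<equiv> ftree_parent E vs m"
  shows "nbhd E (vs ! m) \<inter> internal_before E vs (Suc p) = {vs ! p}"
proof
  have "p < m" and "p \<in> ftree_internal E vs"
    using ftree_parent_less[OF assms(1,3,4)] assms(3,4) unfolding p_def ftree_internal_def by auto
  then show "{vs ! p} \<subseteq> nbhd E (vs ! m) \<inter> internal_before E vs (Suc p)"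
    using ftree_parent_adjacent[OF assms(1,3,4)] nth_in_internal_before_iff[OF assms(2)] assms(4)
    unfolding p_def by (auto simp: nbhd_def)
  show "nbhd E (vs ! m) \<inter> internal_before E vs (Suc p) \<subseteq> {vs ! p}"
  proof
    fix x assume x: "x \<in> nbhd E (vs ! m) \<inter> internal_before E vs (Suc p)"
    then obtain i where i: "i \<le> p" "x = vs ! i"
      unfolding internal_before_def less_Suc_eq_le by blast
    moreover have "\<not> i < p"
      using not_adjacent_before_ftree_parent[OF assms(1,3,4)] x i(2) by (auto simp: p_def nbhd_def)
    ultimately show "x \<in> {vs ! p}" by simp
  qed
qed

lemma zstar_step_force_ftree_internal:
  assumes gs: "gs_ordering V E vs" and two: "2 \<le> length vs" and p: "p \<in> ftree_internal E vs"
  shows "zstar_step V E (V - internal_before E vs (Suc p)) (V - internal_before E vs p)"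
proof -
  let ?W = "internal_before E vs (Suc p)"
  have dist: "distinct vs" and set_vs: "set vs = V" and gsl: "gs_list E vs"
    using gs by (auto simp: gs_ordering_iff)
  have "p < length vs" using p unfolding ftree_internal_def by simp
  note nth_in_W = nth_in_internal_before_iff[OF dist]
  obtain m where m: "0 < m" "m < length vs" "ftree_parent E vs m = p"
    using ftree_internal_has_child[OF gsl two p] .
  have "p < m" using ftree_parent_less[OF gsl m(1,2)] m(3) by simp
  then have "vs ! m \<in> V - ?W" using nth_in_W[OF m(2)] set_vs m(2) by auto
  moreover have "nbhd E (vs ! m) \<inter> ?W = {vs ! p}"
    using nbhd_inter_internal_before_parent[OF gsl dist m(1,2)] m(3) by simp
  moreover have "?W = {vs ! p} \<or> (\<exists>x\<in>?W. E (vs ! p) x)"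
  proof (cases "p = 0")
    case True
    then show ?thesis using internal_before_Suc[of E vs 0] p by (simp add: internal_before_def)
  next
    case False
    then have "ftree_parent E vs p < p" and "ftree_parent E vs p \<in> ftree_internal E vs"
      using ftree_parent_less[OF gsl _ \<open>p < length vs\<close>] \<open>p < length vs\<close>
      unfolding ftree_internal_def by auto
    then have "vs ! ftree_parent E vs p \<in> ?W" using nth_in_W \<open>p < length vs\<close> by simp
    then show ?thesis using ftree_parent_adjacent[OF gsl _ \<open>p < length vs\<close>] False by blast
  qed
  ultimately have "zstar_step V E (V - ?W) (V - (?W - {vs ! p}))"
    using zstar_step_whiteI[of ?W V] internal_before_subset[of E vs] set_vs by blast
  moreover have "?W - {vs ! p} = internal_before E vs p"
    using internal_before_Suc[of E vs p] p nth_in_W[OF \<open>p < length vs\<close>] by auto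
  ultimately show ?thesis by simp
qed

lemma ftree_leaves_zstar_forcing_set:
  assumes gs: "gs_ordering V E vs" and two: "2 \<le> length vs"
  shows "zstar_forcing_set V E (ftree_leaves E vs)"
proof -
  have dist: "distinct vs" and set_vs: "set vs = V" using gs by (auto simp: gs_ordering_iff)
  have reach: "(zstar_step V E)\<^sup>*\<^sup>* (V - internal_before E vs p) V" for p
  proof (induction p)
    case 0
    show ?case by (simp add: internal_before_def)
  next
    case (Suc p)
    show ?case
    proof (cases "p \<in> ftree_internal E vs")
      case True
      then show ?thesis
        using converse_rtranclp_into_rtranclp[OF zstar_step_force_ftree_internal[OF gs two] Suc.IH]
        by simp
    next
      case False
      then show ?thesis using Suc.IH internal_before_Suc[of E vs p] by simp
    qed
  qed
  then show ?thesis
    using ftree_leaves_eq_internal[OF dist] ftree_leaves_subset[of E vs] set_vs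
    unfolding zstar_forcing_set_def by metis
qed

theorem theorem3p10:
  fixes V :: "'a set" and E :: "'a \<Rightarrow> 'a \<Rightarrow> bool" and k :: int
  assumes "connected_graph V E" and "card V \<ge> 2"
  shows "((\<exists>vs. gs_ordering V E vs \<and> int (card (ftree_leaves E vs)) \<le> k) \<longleftrightarrow>
           (\<exists>S. zstar_forcing_set V E S \<and> int (card S) \<le> k))
       \<and> ((\<exists>S. zstar_forcing_set V E S \<and> int (card S) \<le> k) \<longleftrightarrow>
           (\<exists>zs. generic_Z_sequence V E zs \<and> int (length zs) \<ge> int (card V) - k))"
proof -
  have sg: "simple_graph V E" using assms(1) unfolding connected_graph_def by blast
  have leaves_forcing: "\<exists>S. zstar_forcing_set V E S \<and> int (card S) \<le> k"
    if "gs_ordering V E vs" and "int (card (ftree_leaves E vs)) \<le> k" for vs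
  proof -
    have "length vs = card V" using that(1) distinct_card[of vs] unfolding gs_ordering_def by simp
    then have "2 \<le> length vs" using assms(2) by simp
    then show ?thesis using ftree_leaves_zstar_forcing_set[OF that(1)] that(2) by blast
  qed
  have forcing_generic: "\<exists>zs. generic_Z_sequence V E zs \<and> int (length zs) \<ge> int (card V) - k"
    if S: "zstar_forcing_set V E S" and bound: "int (card S) \<le> k" for S
  proof -
    obtain zs where "generic_Z_sequence V E zs" and "length zs + card S = card V"
      using zstar_forcing_set_generic_Z_sequence[OF assms(1) S] .
    then show ?thesis using bound by (intro exI[of _ zs]) linarith
  qed
  have generic_leaves: "\<exists>vs. gs_ordering V E vs \<and> int (card (ftree_leaves E vs)) \<le> k"
    if zs: "generic_Z_sequence V E zs" and bound: "int (length zs) \<ge> int (card V) - k" for zs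
  proof -
    obtain vs where "gs_ordering V E vs" and "card (ftree_leaves E vs) + length zs \<le> card V"
      using generic_Z_sequence_ftree_leaves[OF sg zs] .
    then show ?thesis using bound by (intro exI[of _ vs]) linarith
  qed
  show ?thesis using leaves_forcing forcing_generic generic_leaves by blast
qed

end
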